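(* For every integer $n\ge 0$, \[ \sum_{k=0}^{n}(-4)^k\frac{\binom{n}{k}}{\binom{1+2k}{k}}H_{1+2k} =\frac{2H_{1+2n}-H_n}{2(4n^2-1)}-\frac{4n^3+8n^2+7n-2}{(4n^2-1)^2}. \]
   Context: For an integer $m\ge 0$, $H_m$ denotes the $m$-th harmonic number: $H_0=0$ and $H_m=\sum_{j=1}^m \frac1j$ for $m\ge1$. $\binom{n}{k}$ is the usual binomial coefficient. *)

theory Defs
  imports "HOL-Analysis.Analysis"
begin

end

(*
  Zeilberger's algorithm gives for wt n k = (-4)^k binom(n,k) / binom(2k+1,k) the certificate cert,
  whose difference in k is (2n+3) wt (n+1) k - (2n-1) wt n k.  Summing over k gives
  (2n+3) s(n+1) = (2n-1) s(n) for s(n) = sum_k wt n k, hence s(n) = -1/(4n^2-1).  Summing the same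
  identity against H_{2k+1} by parts, with H_{2k+3} - H_{2k+1} = 1/(2k+2) + 1/(2k+3), gives a
  first-order recurrence for the harmonic sum whose inhomogeneous part only involves s(n) and
  s(n+1); the closed form then follows by induction on n.
*)
theory Submission
  imports Defs
begin

definition wt :: "nat \<Rightarrow> nat \<Rightarrow> real" where
  "wt n k = (-4)^k * real (n choose k) / real ((2*k+1) choose k)"

lemma wt_eq_0: "n < k \<Longrightarrow> wt n k = 0"
  by (simp add: wt_def)

lemma wt_0 [simp]: "wt n 0 = 1"
  by (simp add: wt_def)

lemma binomial_odd_central_Suc:
  "(k+2) * ((2*k+3) choose (k+1)) = 2*(2*k+3) * ((2*k+1) choose k)"
proof -
  have e1: "Suc k = k+1" "Suc (2*k+2) = 2*k+3" "Suc (k+1) = k+2" "Suc (2*k+1) = 2*k+2"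
    by simp_all
  have h1: "(k+1) * ((2*k+3) choose (k+1)) = (2*k+3) * ((2*k+2) choose k)"
    using Suc_times_binomial[of k "2*k+2"] unfolding e1 .
  have h2: "(k+2) * ((2*k+2) choose (k+2)) = (2*k+2) * ((2*k+1) choose (k+1))"
    using Suc_times_binomial[of "k+1" "2*k+1"] unfolding e1 .
  have s1: "(2*k+2) choose k = (2*k+2) choose (k+2)"
    using binomial_symmetric[of k "2*k+2"] by simp
  have s2: "(2*k+1) choose (k+1) = (2*k+1) choose k"
    using binomial_symmetric[of k "2*k+1"] by simp
  have "(k+1) * ((k+2) * ((2*k+3) choose (k+1))) = (k+2) * ((2*k+3) * ((2*k+2) choose k))"
    by (simp only: h1 mult.left_commute[of "k+1"])
  also have "\<dots> = (2*k+3) * ((2*k+2) * ((2*k+1) choose k))"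
    by (simp only: s1 mult.left_commute[of "k+2"] h2 s2)
  also have "\<dots> = (k+1) * (2*(2*k+3) * ((2*k+1) choose k))"
    by (simp del: binomial_Suc_Suc add: algebra_simps)
  finally show ?thesis
    by (metis Suc_eq_plus1 mult_left_cancel nat.distinct(1))
qed

lemma binomial_Suc_right_real:
  "real (k+1) * real (m choose (k+1)) = (real m - real k) * real (m choose k)"
proof (cases "k \<le> m")
  case True
  have "(k+1) * (m choose (k+1)) = (m - k) * (m choose k)"
    using binomial_absorption[of k m] binomial_absorb_comp[of m k] by simp
  then show ?thesis using True by (metis of_nat_diff of_nat_mult)
qed (simp add: binomial_eq_0)

lemma wt_Suc_right:
  "(real k+1) * (2*real k+3) * wt m (Suc k) = -2 * (real m - real k) * (real k+2) * wt m k"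
proof -
  have central: "(real k+2) * real ((2*k+3) choose (k+1)) = 2*(2*real k+3) * real ((2*k+1) choose k)"
  proof -
    have "real ((k+2) * ((2*k+3) choose (k+1))) = real (2*(2*k+3) * ((2*k+1) choose k))"
      by (simp only: binomial_odd_central_Suc)
    then show ?thesis by (simp add: algebra_simps del: binomial_Suc_Suc)
  qed
  have pos: "real ((2*k+3) choose (k+1)) > 0" "real ((2*k+1) choose k) > 0"
    by simp_all
  have odd_Suc: "2*Suc k+1 = 2*k+3" by simp
  have "(real k+1) * (2*real k+3) * wt m (Suc k)
      = -4 * (2*real k+3) * ((-4)^k * (real (k+1) * real (m choose (k+1)))) / real ((2*k+3) choose (k+1))"
    unfolding wt_def odd_Suc using pos by (simp add: field_simps del: binomial_Suc_Suc)
  also have "\<dots> = -2 * (real m - real k) * ((-4)^k * real (m choose k))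
                    * (2*(2*real k+3) / real ((2*k+3) choose (k+1)))"
    unfolding binomial_Suc_right_real using pos by (simp add: field_simps del: binomial_Suc_Suc)
  also have "2*(2*real k+3) / real ((2*k+3) choose (k+1)) = (real k+2) / real ((2*k+1) choose k)"
    using central pos by (simp add: field_simps del: binomial_Suc_Suc)
  finally show ?thesis by (simp add: wt_def[of m k])
qed

lemma wt_Suc_left: "(real n+1) * wt n k = (real n+1 - real k) * wt (Suc n) k"
proof (cases "k \<le> Suc n")
  case True
  have "Suc n * (n choose k) = (Suc n - k) * (Suc n choose k)"
    using binomial_absorb_comp[of "Suc n" k] by simp
  then have "real (Suc n) * real (n choose k) = real (Suc n - k) * real (Suc n choose k)"
    unfolding of_nat_mult[symmetric] by (rule arg_cong)
  moreover have "real (Suc n - k) = real n + 1 - real k" "real (Suc n) = real n + 1"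
    using True by (simp_all add: of_nat_diff)
  ultimately have binom: "(real n+1) * real (n choose k) = (real n+1 - real k) * real (Suc n choose k)"
    by (simp only:)
  have "(real n+1) * wt n k = (-4)^k / real ((2*k+1) choose k) * ((real n+1) * real (n choose k))"
    by (simp add: wt_def)
  also have "\<dots> = (real n+1 - real k) * wt (Suc n) k"
    unfolding binom by (simp add: wt_def)
  finally show ?thesis .
qed (simp add: wt_eq_0)

definition cert :: "nat \<Rightarrow> nat \<Rightarrow> real" where
  "cert n k = - real k * (2*real k+1) * wt (Suc n) k / (real n+1)"

lemma cert_Suc_diff:
  "cert n (Suc k) - cert n k = (2*real n+3) * wt (Suc n) k - (2*real n-1) * wt n k"
proof -
  define u where "u = wt (Suc n) k / (real n+1)"
  have u: "wt (Suc n) k = (real n+1) * u"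
    by (simp add: u_def)
  have "cert n (Suc k) = - ((real k+1) * (2*real k+3) * wt (Suc n) (Suc k)) / (real n+1)"
    by (simp add: cert_def algebra_simps)
  also have "\<dots> = 2 * (real n+1 - real k) * (real k+2) * u"
    unfolding wt_Suc_right u by (simp add: field_simps)
  finally have cert_Suc: "cert n (Suc k) = 2 * (real n+1 - real k) * (real k+2) * u" .
  have cert: "cert n k = - real k * (2*real k+1) * u"
    unfolding cert_def u by simp
  have wt_n: "wt n k = (real n+1 - real k) * u"
    using wt_Suc_left[of n k] unfolding u by simp
  show ?thesis unfolding cert_Suc cert wt_n u by (simp add: algebra_simps)
qed

lemma harm_odd_Suc:
  "harm (2*Suc k+1) = harm (2*k+1) + 1/(2*real k+2) + (1/(2*real k+3) :: real)"
proof -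
  have odd_Suc: "2*Suc k+1 = Suc (Suc (2*k+1))" by simp
  show ?thesis unfolding odd_Suc harm_Suc by (simp add: field_simps add_ac)
qed

lemma cert_mult_harm_Suc:
  "cert n (Suc k) * harm (2*Suc k+1)
   = cert n (Suc k) * harm (2*k+1) - (4*real (Suc k)+1) * wt (Suc n) (Suc k) / (2*(real n+1))"
proof -
  define d :: real where "d = 1/(2*real k+2) + 1/(2*real k+3)"
  have "2*real k+2 \<noteq> 0" "2*real k+3 \<noteq> 0" by linarith+
  then have "(real k+1) * (2*real k+3) * (1/(2*real k+2)) = (2*real k+3)/2"
    "(real k+1) * (2*real k+3) * (1/(2*real k+3)) = real k+1"
    by (simp_all add: field_simps)
  then have d: "(real k+1) * (2*real k+3) * d = (4*real (Suc k)+1)/2"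
    unfolding d_def by (simp add: ring_distribs)
  have "cert n (Suc k) * harm (2*Suc k+1) = cert n (Suc k) * harm (2*k+1) + cert n (Suc k) * d"
    unfolding harm_odd_Suc d_def by (simp add: ring_distribs)
  also have "cert n (Suc k) * d = - ((real k+1) * (2*real k+3) * d) * wt (Suc n) (Suc k) / (real n+1)"
    by (simp add: cert_def field_simps)
  also have "\<dots> = - (4*real (Suc k)+1) * wt (Suc n) (Suc k) / (2*(real n+1))"
    unfolding d by (simp add: field_simps)
  finally show ?thesis by (simp add: field_simps)
qed

lemma real_odd_neq_0:
  "2 * real n - 1 \<noteq> 0" "2 * real n + 1 \<noteq> 0" "2 * real n + 3 \<noteq> 0" "real n + 1 \<noteq> 0"
proof -
  show "2 * real n - 1 \<noteq> 0"
  proof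
    assume "2 * real n - 1 = 0"
    then have "real (2*n) = real 1" by simp
    then have "2*n = 1" by (simp only: of_nat_eq_iff)
    then show False by presburger
  qed
qed simp_all

lemma four_real_square_minus_one: "4 * real n ^ 2 - 1 = (2*real n-1) * (2*real n+1)"
  by (simp add: algebra_simps power2_eq_square)

lemma four_real_Suc_square_minus_one: "4 * real (Suc n) ^ 2 - 1 = (2*real n+1) * (2*real n+3)"
  by (simp add: algebra_simps power2_eq_square)

lemma sum_atMost_telescope: "(\<Sum>k\<le>n. f (Suc k) - f k) = f (Suc n) - (f 0 :: 'a::ab_group_add)"
  using sum_lessThan_telescope[of f "Suc n"] by (simp add: lessThan_Suc_atMost)

definition wt_sum :: "nat \<Rightarrow> real" where
  "wt_sum n = (\<Sum>k\<le>n. wt n k)"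

definition wt_harm_sum :: "nat \<Rightarrow> real" where
  "wt_harm_sum n = (\<Sum>k\<le>n. wt n k * harm (2*k+1))"

lemma wt_sum_atMost_Suc: "wt_sum n = (\<Sum>k\<le>Suc n. wt n k)"
  by (simp add: wt_sum_def wt_eq_0)

lemma wt_harm_sum_atMost_Suc: "wt_harm_sum n = (\<Sum>k\<le>Suc n. wt n k * harm (2*k+1))"
  by (simp add: wt_harm_sum_def wt_eq_0)

lemma wt_sum_recurrence: "(2*real n+3) * wt_sum (Suc n) = (2*real n-1) * wt_sum n"
proof -
  have "(2*real n+3) * wt_sum (Suc n) - (2*real n-1) * wt_sum n
      = (\<Sum>k\<le>Suc n. (2*real n+3) * wt (Suc n) k - (2*real n-1) * wt n k)"
    unfolding wt_sum_atMost_Suc[of n] wt_sum_def[of "Suc n"]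
    by (simp add: sum_subtractf sum_distrib_left ring_distribs)
  also have "\<dots> = (\<Sum>k\<le>Suc n. cert n (Suc k) - cert n k)"
    by (simp add: cert_Suc_diff)
  also have "\<dots> = 0"
    unfolding sum_atMost_telescope by (simp add: cert_def wt_eq_0)
  finally show ?thesis by simp
qed

lemma wt_sum_closed: "wt_sum n = -1 / (4 * real n ^ 2 - 1)"
proof (induction n)
  case 0
  then show ?case by (simp add: wt_sum_def)
next
  case (Suc n)
  have "wt_sum (Suc n) = (2*real n-1) * wt_sum n / (2*real n+3)"
    using wt_sum_recurrence[of n] real_odd_neq_0(3)[of n] by (simp add: field_simps)
  also have "(2*real n-1) * wt_sum n = -1 / (2*real n+1)"
    unfolding Suc.IH four_real_square_minus_one using real_odd_neq_0(1)[of n] by simp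
  finally show ?case unfolding four_real_Suc_square_minus_one by simp
qed

lemma sum_weighted_wt:
  "(\<Sum>k\<le>Suc n. (4*real k+1) * wt (Suc n) k)
   = (4*real n+5) * wt_sum (Suc n) - 4*(real n+1) * wt_sum n"
proof -
  have "(\<Sum>k\<le>Suc n. (4*real k+1) * wt (Suc n) k)
      = (\<Sum>k\<le>Suc n. (4*real n+5) * wt (Suc n) k - 4*(real n+1) * wt n k)"
  proof (rule sum.cong)
    show "(4*real k+1) * wt (Suc n) k = (4*real n+5) * wt (Suc n) k - 4*(real n+1) * wt n k" for k
      using wt_Suc_left[of n k] by (simp add: algebra_simps)
  qed simp
  also have "\<dots> = (4*real n+5) * wt_sum (Suc n) - 4*(real n+1) * wt_sum n"
    unfolding wt_sum_atMost_Suc[of n] wt_sum_def[of "Suc n"]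
    by (simp add: sum_subtractf sum_distrib_left ring_distribs)
  finally show ?thesis .
qed

lemma wt_harm_sum_recurrence_weighted:
  "(2*real n+3) * wt_harm_sum (Suc n) - (2*real n-1) * wt_harm_sum n
   = ((\<Sum>k\<le>Suc n. (4*real k+1) * wt (Suc n) k) - 1) / (2*(real n+1))"
proof -
  define E where "E j = (4*real j+1) * wt (Suc n) j / (2*(real n+1))" for j
  have "(2*real n+3) * wt_harm_sum (Suc n) - (2*real n-1) * wt_harm_sum n
      = (\<Sum>k\<le>Suc n. (2*real n+3) * (wt (Suc n) k * harm (2*k+1))
                        - (2*real n-1) * (wt n k * harm (2*k+1)))"
    unfolding wt_harm_sum_atMost_Suc[of n] wt_harm_sum_def[of "Suc n"]
    by (simp add: sum_subtractf sum_distrib_left ring_distribs)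
  also have "\<dots> = (\<Sum>k\<le>Suc n. (cert n (Suc k) - cert n k) * harm (2*k+1))"
    by (simp add: cert_Suc_diff algebra_simps)
  also have "\<dots> = (\<Sum>k\<le>Suc n. (cert n (Suc k) * harm (2*Suc k+1) - cert n k * harm (2*k+1))
                                  + E (Suc k))"
  proof (rule sum.cong)
    show "(cert n (Suc k) - cert n k) * harm (2*k+1)
        = (cert n (Suc k) * harm (2*Suc k+1) - cert n k * harm (2*k+1)) + E (Suc k)" for k
      unfolding cert_mult_harm_Suc E_def by (simp add: algebra_simps)
  qed simp
  also have "\<dots> = (\<Sum>k\<le>Suc n. cert n (Suc k) * harm (2*Suc k+1) - cert n k * harm (2*k+1))
                 + (\<Sum>k\<le>Suc n. E (Suc k))"
    by (rule sum.distrib)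
  also have "(\<Sum>k\<le>Suc n. cert n (Suc k) * harm (2*Suc k+1) - cert n k * harm (2*k+1)) = 0"
    unfolding sum_atMost_telescope[where f = "\<lambda>k. cert n k * harm (2*k+1)"]
    by (simp add: cert_def wt_eq_0)
  also have "(\<Sum>k\<le>Suc n. E (Suc k)) = (\<Sum>k\<le>Suc n. E k) - E 0"
    using sum.atMost_Suc_shift[of E "Suc n"] by (simp add: E_def wt_eq_0)
  finally show ?thesis
    by (simp add: E_def sum_divide_distrib[symmetric] diff_divide_distrib)
qed

lemma recurrence_rhs_simplified:
  fixes x :: real
  assumes "2*x-1 \<noteq> 0" "2*x+1 \<noteq> 0" "2*x+3 \<noteq> 0" "x+1 \<noteq> 0"
  shows "((4*x+5) * (-1 / ((2*x+1) * (2*x+3))) - 4*(x+1) * (-1 / ((2*x-1) * (2*x+1))) - 1) / (2*(x+1))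
       = (2/(2*x-1) - 1/(2*x+3) - 1) / (2*x+1)"
proof -
  define a b c d where "a = 2*x-1" and "b = 2*x+1" and "c = 2*x+3" and "d = x+1"
  have "a \<noteq> 0" "b \<noteq> 0" "c \<noteq> 0" "d \<noteq> 0"
    using assms by (simp_all add: a_def b_def c_def d_def)
  then have "((4*x+5) * (-1 / (b*c)) - 4*d * (-1 / (a*b)) - 1) / (2*d) = (2/a - 1/c - 1) / b"
    by (simp add: field_simps) (simp add: b_def c_def d_def algebra_simps)
  then show ?thesis unfolding a_def b_def c_def d_def .
qed

lemma wt_harm_sum_recurrence:
  "(2*real n+3) * wt_harm_sum (Suc n) - (2*real n-1) * wt_harm_sum n
   = (2/(2*real n-1) - 1/(2*real n+3) - 1) / (2*real n+1)"
proof -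
  show ?thesis
    unfolding wt_harm_sum_recurrence_weighted sum_weighted_wt wt_sum_closed four_real_Suc_square_minus_one
    unfolding four_real_square_minus_one
    by (rule recurrence_rhs_simplified[OF real_odd_neq_0])
qed

lemma wt_harm_sum_closed:
  "wt_harm_sum n = (harm (2*n+1) - harm n / 2 - (real n + 2 + 2/(2*real n-1) + 2/(2*real n+1)))
                   / (4 * real n ^ 2 - 1)"
proof (induction n)
  case 0
  then show ?case by (simp add: wt_harm_sum_def harm_def)
next
  case (Suc n)
  define v where "v = harm (2*n+1) - harm n / 2 - (real n + 2 + 2/(2*real n-1) + (2/(2*real n+1) :: real))"
  have "harm (2*Suc n+1) - harm (Suc n) / 2
          - (real (Suc n) + 2 + 2/(2*real (Suc n)-1) + 2/(2*real (Suc n)+1))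
      = v + (2/(2*real n-1) - 1/(2*real n+3) - 1)"
  proof -
    have "harm (Suc n) / 2 = harm n / 2 + (1/(2*real n+2) :: real)"
      by (simp add: harm_Suc field_simps)
    moreover have "2/(2*real n+3) = 2 * (1/(2*real n+3))" "real (Suc n) = real n + 1"
      by simp_all
    moreover have odd: "2*real (Suc n)-1 = 2*real n+1" "2*real (Suc n)+1 = 2*real n+3"
      by simp_all
    ultimately show ?thesis
      unfolding harm_odd_Suc v_def odd by linarith
  qed
  moreover have "wt_harm_sum (Suc n) = (v + (2/(2*real n-1) - 1/(2*real n+3) - 1)) / ((2*real n+1) * (2*real n+3))"
  proof -
    have "(2*real n-1) * wt_harm_sum n = v / (2*real n+1)"
      unfolding Suc.IH four_real_square_minus_one v_def using real_odd_neq_0(1)[of n] by simp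
    then have "(2*real n+3) * wt_harm_sum (Suc n)
        = v / (2*real n+1) + (2/(2*real n-1) - 1/(2*real n+3) - 1) / (2*real n+1)"
      using wt_harm_sum_recurrence[of n] by linarith
    also have "\<dots> = (v + (2/(2*real n-1) - 1/(2*real n+3) - 1)) / (2*real n+1)"
      by (rule add_divide_distrib[symmetric])
    finally show ?thesis
      using real_odd_neq_0(3)[of n] by (simp add: eq_divide_eq ac_simps)
  qed
  ultimately show ?case unfolding four_real_Suc_square_minus_one by simp
qed

lemma closed_form_partial_fractions:
  "real n + 2 + 2/(2*real n-1) + 2/(2*real n+1)
   = (4 * real n ^ 3 + 8 * real n ^ 2 + 7 * real n - 2) / (4 * real n ^ 2 - 1)"
proof -
  show ?thesis
    using real_odd_neq_0[of n] unfolding four_real_square_minus_one by (simp add: field_simps) (simp add: algebra_simps power2_eq_square power3_eq_cube)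
qed

theorem theorem4:
  fixes n :: nat
  shows "(\<Sum>k=0..n. (-4::real)^k * real (n choose k) / real ((1+2*k) choose k) * harm (1+2*k))
    = (2 * harm (1+2*n) - harm n) / (2 * (4 * real n ^ 2 - 1))
      - (4 * real n ^ 3 + 8 * real n ^ 2 + 7 * real n - 2) / (4 * real n ^ 2 - 1) ^ 2"
proof -
  define D where "D = 4 * real n ^ 2 - 1"
  have "D \<noteq> 0"
    using real_odd_neq_0[of n] by (simp add: D_def four_real_square_minus_one)
  have "(\<Sum>k=0..n. (-4::real)^k * real (n choose k) / real ((1+2*k) choose k) * harm (1+2*k))
      = wt_harm_sum n"
    by (simp add: wt_harm_sum_def wt_def atLeast0AtMost add.commute)
  also have "\<dots> = (harm (1+2*n) - harm n / 2 - (4 * real n ^ 3 + 8 * real n ^ 2 + 7 * real n - 2) / D) / D"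
    unfolding wt_harm_sum_closed closed_form_partial_fractions D_def by (simp add: add.commute)
  also have "\<dots> = (2 * harm (1+2*n) - harm n) / (2 * D)
      - (4 * real n ^ 3 + 8 * real n ^ 2 + 7 * real n - 2) / D ^ 2"
    using \<open>D \<noteq> 0\<close> by (simp add: field_simps power2_eq_square)
  finally show ?thesis unfolding D_def .
qed

end
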